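(* Let $n\ge2$ and $k\ge1$ be integers, and let $(S^n,g_0)$ be the round unit sphere $S^n\subset\mathbb{R}^{n+1}$. Let $x^0,\dots,x^n$ be the restrictions to $S^n$ of the standard coordinates of $\mathbb{R}^{n+1}$. Then for all $u\in C^\infty(S^n)$, \[ \sum_{i=0}^n x^i\bigl(L_{2k}(x^iu) - x^iL_{2k}(u)\bigr) = k(n+2k-2)\,L_{2k-2}u . \]
   Context: $\Delta$ is the (nonpositive) Laplace–Beltrami operator of $g_0$. For an integer $m\ge1$, $L_{2m}:=\prod_{j=1}^m\bigl(-\Delta+\tfrac{(n-2j)(n+2j-2)}{4}\bigr)$ (the GJMS operator on the round sphere), and $L_0$ is the identity operator. *)

theory Defs
  imports "HOL-Analysis.Analysis"
begin

text \<open>Functions on the round sphere S^n \<subseteq> R^(n+1) are represented as functions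
  u :: real^'n \<Rightarrow> real, with CARD('n) = n+1; only their values on sphere 0 1 matter.\<close>

definition partial_deriv :: "'n::finite \<Rightarrow> (real^'n \<Rightarrow> real) \<Rightarrow> real^'n \<Rightarrow> real" where
  "partial_deriv i f x = deriv (\<lambda>t. f (x + t *\<^sub>R axis i 1)) 0"

fun iter_partial :: "'n::finite list \<Rightarrow> (real^'n \<Rightarrow> real) \<Rightarrow> real^'n \<Rightarrow> real" where
  "iter_partial [] f = f"
| "iter_partial (i # is) f = partial_deriv i (iter_partial is f)"

definition smooth_on :: "(real^'n::finite) set \<Rightarrow> (real^'n \<Rightarrow> real) \<Rightarrow> bool" where
  "smooth_on S f \<longleftrightarrow>
     (\<forall>is. continuous_on S (iter_partial is f) \<and>
       (\<forall>i. \<forall>x\<in>S. (\<lambda>t. iter_partial is f (x + t *\<^sub>R axis i 1)) differentiable (at 0)))"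

definition hom_ext :: "(real^'n::finite \<Rightarrow> real) \<Rightarrow> real^'n \<Rightarrow> real" where
  "hom_ext u y = u (y /\<^sub>R norm y)"

text \<open>u \<in> C^\<infinity>(S^n): its zero-homogeneous extension is smooth on R^(n+1) - {0}.\<close>
definition smooth_on_sphere :: "(real^'n::finite \<Rightarrow> real) \<Rightarrow> bool" where
  "smooth_on_sphere u \<longleftrightarrow> smooth_on (- {0}) (hom_ext u)"

definition euclid_laplacian :: "(real^'n::finite \<Rightarrow> real) \<Rightarrow> real^'n \<Rightarrow> real" where
  "euclid_laplacian f x = (\<Sum>i\<in>UNIV. partial_deriv i (partial_deriv i f) x)"

text \<open>(Nonpositive) Laplace-Beltrami operator of the round metric, evaluated at points of
  the unit sphere: Laplacian of the zero-homogeneous extension.\<close>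
definition sphere_laplacian :: "(real^'n::finite \<Rightarrow> real) \<Rightarrow> real^'n \<Rightarrow> real" where
  "sphere_laplacian u x = euclid_laplacian (hom_ext u) x"

definition sph_dim :: "'n::finite itself \<Rightarrow> real" where
  "sph_dim _ = real CARD('n) - 1"

text \<open>GJMS operator L_{2m} = prod_{j=1}^m (-\<Delta> + (n-2j)(n+2j-2)/4), L_0 = id.\<close>
fun gjms :: "nat \<Rightarrow> (real^'n::finite \<Rightarrow> real) \<Rightarrow> real^'n \<Rightarrow> real" where
  "gjms 0 u = u"
| "gjms (Suc m) u =
     (\<lambda>x. - sphere_laplacian (gjms m u) x
          + ((sph_dim TYPE('n) - 2 * real (Suc m)) * (sph_dim TYPE('n) + 2 * real (Suc m) - 2) / 4)
            * gjms m u x)"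

end

(*
  Extend functions on the sphere zero-homogeneously to the punctured space. For an a-homogeneous G
  with restriction g, the product rule for |y| powr -a * G and Euler's identity give
  \<Delta>g = \<Delta>G - a (a + n - 1) G on the sphere, and the tangential derivatives T_i g are the
  Euclidean partial derivatives of the extension. From this one gets, for smooth h,
    \<Delta>(x_i h) = x_i \<Delta>h + 2 T_i h - n x_i h,          \<Sum>_i x_i T_i h = 0,
    \<Sum>_i T_i (x_i h) = n h,          \<Delta>(T_i h) = T_i \<Delta>h + (n - 2) T_i h - 2 x_i \<Delta>h,
  the last one by the symmetry of second derivatives. Summed over i, they show that
  Q_m = \<Sum>_i x_i L_2m (x_i u) and R_m = \<Sum>_i T_i L_2m (x_i u) satisfy a closed linear recursion
  in m, and induction gives Q_m = L_2m u + m (n + 2m - 2) L_(2m-2) u. As \<Sum>_i x_i^2 = 1 on the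
  sphere, this is the claim.
*)

theory Submission
  imports Defs
begin

section \<open>Partial derivatives on open sets\<close>

definition partially_differentiable_on :: "(real^'n::finite) set \<Rightarrow> (real^'n \<Rightarrow> real) \<Rightarrow> bool" where
  "partially_differentiable_on S f \<longleftrightarrow>
     continuous_on S f \<and> (\<forall>i. \<forall>x\<in>S. (\<lambda>t. f (x + t *\<^sub>R axis i 1)) differentiable (at 0))"

lemma smooth_on_iff_iter_partial:
  "smooth_on S f \<longleftrightarrow> (\<forall>is. partially_differentiable_on S (iter_partial is f))"
  by (auto simp: smooth_on_def partially_differentiable_on_def)

lemma iter_partial_append: "iter_partial (is @ js) f = iter_partial is (iter_partial js f)"
  by (induction "is") auto

lemma has_real_derivative_partial_deriv:
  assumes "partially_differentiable_on S f" "x \<in> S"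
  shows "((\<lambda>t. f (x + t *\<^sub>R axis i 1)) has_real_derivative partial_deriv i f x) (at 0)"
  using assms unfolding partial_deriv_def partially_differentiable_on_def
  by (simp add: DERIV_deriv_iff_real_differentiable)

lemma has_real_derivative_partial_deriv_shift:
  assumes "partially_differentiable_on S f" "x + s *\<^sub>R axis i 1 \<in> S"
  shows "((\<lambda>t. f (x + t *\<^sub>R axis i 1)) has_real_derivative partial_deriv i f (x + s *\<^sub>R axis i 1)) (at s)"
proof -
  have "((\<lambda>t. f ((x + s *\<^sub>R axis i 1) + t *\<^sub>R axis i 1)) has_real_derivative
      partial_deriv i f (x + s *\<^sub>R axis i 1)) (at 0)"
    by (rule has_real_derivative_partial_deriv[OF assms])
  then have "((\<lambda>t. f (x + (t + s) *\<^sub>R axis i 1)) has_real_derivative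
      partial_deriv i f (x + s *\<^sub>R axis i 1)) (at 0)"
    by (simp add: algebra_simps)
  then show ?thesis
    using DERIV_shift[where f="\<lambda>t. f (x + t *\<^sub>R axis i 1)" and x=0 and z=s] by simp
qed

lemma eventually_line_in_open:
  fixes x v :: "'a::real_normed_vector"
  assumes "open S" "x \<in> S"
  shows "\<forall>\<^sub>F t in nhds (0::real). x + t *\<^sub>R v \<in> S"
proof -
  have "((\<lambda>t::real. x + t *\<^sub>R v) \<longlongrightarrow> x) (at 0)"
    by (rule tendsto_eq_intros) (auto intro!: tendsto_eq_intros)
  then have "\<forall>\<^sub>F t in at 0. x + t *\<^sub>R v \<in> S"
    using assms by (auto intro: topological_tendstoD)
  then show ?thesis using assms by (simp add: eventually_nhds_conv_at)
qed

lemma partial_deriv_cong: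
  assumes "open S" "x \<in> S" "\<And>y. y \<in> S \<Longrightarrow> f y = g y"
  shows "partial_deriv i f x = partial_deriv i g x"
  unfolding partial_deriv_def
  by (rule deriv_cong_ev)
    (use eventually_line_in_open[OF assms(1,2), of "axis i 1"] assms(3) in \<open>auto elim!: eventually_mono\<close>)

lemma iter_partial_cong:
  assumes "open S" "\<And>y. y \<in> S \<Longrightarrow> f y = g y" "x \<in> S"
  shows "iter_partial is f x = iter_partial is g x"
  using assms(3)
proof (induction "is" arbitrary: x)
  case Nil
  then show ?case using assms by simp
next
  case (Cons i "is")
  have "partial_deriv i (iter_partial is f) x = partial_deriv i (iter_partial is g) x"
    by (rule partial_deriv_cong[OF assms(1) Cons.prems Cons.IH])
  then show ?case by simp
qed

lemma partially_differentiable_on_cong: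
  assumes "open S" "\<And>y. y \<in> S \<Longrightarrow> f y = g y"
  shows "partially_differentiable_on S f \<longleftrightarrow> partially_differentiable_on S g"
proof -
  have "(\<lambda>t. f (x + t *\<^sub>R axis i 1)) differentiable (at 0) \<longleftrightarrow>
        (\<lambda>t. g (x + t *\<^sub>R axis i 1)) differentiable (at 0)" if "x \<in> S" for x i
  proof -
    have "\<forall>\<^sub>F t in nhds 0. f (x + t *\<^sub>R axis i 1) = g (x + t *\<^sub>R axis i 1)"
      using eventually_line_in_open[OF assms(1) that, of "axis i 1"] assms(2)
      by (auto elim!: eventually_mono)
    from DERIV_cong_ev[OF refl this refl] show ?thesis
      unfolding real_differentiable_def by simp
  qed
  moreover have "continuous_on S f \<longleftrightarrow> continuous_on S g"
    using assms(2) by (rule continuous_on_cong[OF refl])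
  ultimately show ?thesis
    unfolding partially_differentiable_on_def by blast
qed

lemma smooth_on_cong:
  assumes "open S" "\<And>y. y \<in> S \<Longrightarrow> f y = g y"
  shows "smooth_on S f \<longleftrightarrow> smooth_on S g"
proof -
  have "partially_differentiable_on S (iter_partial is f) \<longleftrightarrow>
        partially_differentiable_on S (iter_partial is g)" for "is"
    by (rule partially_differentiable_on_cong[OF assms(1) iter_partial_cong[OF assms]])
  then show ?thesis unfolding smooth_on_iff_iter_partial by blast
qed

text \<open>Closure of smoothness under products is proved by induction on the order of differentiability.\<close>

definition smooth_upto :: "nat \<Rightarrow> (real^'n::finite) set \<Rightarrow> (real^'n \<Rightarrow> real) \<Rightarrow> bool" where
  "smooth_upto n S f \<longleftrightarrow> (\<forall>is. length is \<le> n \<longrightarrow> partially_differentiable_on S (iter_partial is f))"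

lemma smooth_on_iff_smooth_upto: "smooth_on S f \<longleftrightarrow> (\<forall>n. smooth_upto n S f)"
  unfolding smooth_on_iff_iter_partial smooth_upto_def by auto

lemma smooth_upto_0: "smooth_upto 0 S f \<longleftrightarrow> partially_differentiable_on S f"
  by (auto simp: smooth_upto_def)

lemma smooth_upto_Suc:
  "smooth_upto (Suc n) S f \<longleftrightarrow>
     partially_differentiable_on S f \<and> (\<forall>i. smooth_upto n S (partial_deriv i f))"
proof
  assume f: "smooth_upto (Suc n) S f"
  show "partially_differentiable_on S f \<and> (\<forall>i. smooth_upto n S (partial_deriv i f))"
  proof safe
    show "partially_differentiable_on S f"
      using f[unfolded smooth_upto_def, rule_format, of "[]"] by simp
    fix i
    show "smooth_upto n S (partial_deriv i f)"
      unfolding smooth_upto_def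
    proof safe
      fix "is" :: "'a list"
      assume "length is \<le> n"
      then show "partially_differentiable_on S (iter_partial is (partial_deriv i f))"
        using f[unfolded smooth_upto_def, rule_format, of "is @ [i]"]
        by (simp add: iter_partial_append)
    qed
  qed
next
  assume f: "partially_differentiable_on S f \<and> (\<forall>i. smooth_upto n S (partial_deriv i f))"
  show "smooth_upto (Suc n) S f"
    unfolding smooth_upto_def
  proof safe
    fix "is" :: "'a list"
    assume len: "length is \<le> Suc n"
    show "partially_differentiable_on S (iter_partial is f)"
    proof (cases "is" rule: rev_cases)
      case Nil
      then show ?thesis using f by simp
    next
      case (snoc js i)
      then show ?thesis using f len unfolding smooth_upto_def
        by (simp add: iter_partial_append)
    qed
  qed
qed

lemma smooth_upto_Suc_imp: "smooth_upto (Suc n) S f \<Longrightarrow> smooth_upto n S f"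
  by (auto simp: smooth_upto_def)

lemma smooth_upto_cong:
  assumes "open S" "\<And>y. y \<in> S \<Longrightarrow> f y = g y"
  shows "smooth_upto n S f \<longleftrightarrow> smooth_upto n S g"
proof -
  have "partially_differentiable_on S (iter_partial is f) \<longleftrightarrow>
        partially_differentiable_on S (iter_partial is g)" for "is"
    by (rule partially_differentiable_on_cong[OF assms(1) iter_partial_cong[OF assms]])
  then show ?thesis unfolding smooth_upto_def by blast
qed

lemma smooth_on_imp_partially_differentiable_on:
  "smooth_on S f \<Longrightarrow> partially_differentiable_on S f"
  unfolding smooth_on_iff_iter_partial by (metis iter_partial.simps(1))

lemma smooth_on_partial_deriv: "smooth_on S f \<Longrightarrow> smooth_on S (partial_deriv i f)"
  by (meson smooth_on_iff_smooth_upto smooth_upto_Suc)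

lemma smooth_on_imp_continuous_on: "smooth_on S f \<Longrightarrow> continuous_on S f"
  using smooth_on_imp_partially_differentiable_on partially_differentiable_on_def by blast

lemma partially_differentiable_on_const: "partially_differentiable_on S (\<lambda>x. c)"
  unfolding partially_differentiable_on_def by auto

lemma partially_differentiable_on_coord: "partially_differentiable_on S (\<lambda>y. y $ j)"
  unfolding partially_differentiable_on_def
  by (auto simp: axis_def intro!: continuous_on_component continuous_on_id differentiable_add
      differentiable_const differentiable_ident)

lemma partially_differentiable_on_add:
  "partially_differentiable_on S f \<Longrightarrow> partially_differentiable_on S g \<Longrightarrow>
    partially_differentiable_on S (\<lambda>x. f x + g x)"
  unfolding partially_differentiable_on_def by (auto intro!: continuous_on_add differentiable_add)

lemma partially_differentiable_on_mult:
  "partially_differentiable_on S f \<Longrightarrow> partially_differentiable_on S g \<Longrightarrow>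
    partially_differentiable_on S (\<lambda>x. f x * g x)"
  unfolding partially_differentiable_on_def by (auto intro!: continuous_on_mult differentiable_mult)

lemma partially_differentiable_on_sum:
  "finite I \<Longrightarrow> (\<And>i. i \<in> I \<Longrightarrow> partially_differentiable_on S (f i)) \<Longrightarrow>
    partially_differentiable_on S (\<lambda>x. \<Sum>i\<in>I. f i x)"
  by (induction I rule: finite_induct)
    (auto intro!: partially_differentiable_on_const partially_differentiable_on_add)

lemma partial_deriv_const: "partial_deriv i (\<lambda>x. c) = (\<lambda>x. 0)"
  unfolding partial_deriv_def by simp

lemma partial_deriv_coord: "partial_deriv i (\<lambda>y. y $ j) = (\<lambda>x. if j = i then 1 else 0)"
proof
  fix x :: "real^'a"
  have "((\<lambda>t. (x + t *\<^sub>R axis i 1) $ j) has_real_derivative (if j = i then 1 else 0)) (at 0)"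
    by (auto simp: axis_def intro!: derivative_eq_intros)
  then show "partial_deriv i (\<lambda>y. y $ j) x = (if j = i then 1 else 0)"
    unfolding partial_deriv_def by (rule DERIV_imp_deriv)
qed

lemma partial_deriv_add:
  assumes "partially_differentiable_on S f" "partially_differentiable_on S g" "x \<in> S"
  shows "partial_deriv i (\<lambda>x. f x + g x) x = partial_deriv i f x + partial_deriv i g x"
  unfolding partial_deriv_def[of i "\<lambda>x. f x + g x"]
  using assms by (intro DERIV_imp_deriv DERIV_add has_real_derivative_partial_deriv)

lemma partial_deriv_mult:
  assumes "partially_differentiable_on S f" "partially_differentiable_on S g" "x \<in> S"
  shows "partial_deriv i (\<lambda>x. f x * g x) x = partial_deriv i f x * g x + f x * partial_deriv i g x"
proof -
  have "((\<lambda>t. f (x + t *\<^sub>R axis i 1) * g (x + t *\<^sub>R axis i 1)) has_real_derivative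
     partial_deriv i f x * g (x + 0 *\<^sub>R axis i 1) + partial_deriv i g x * f (x + 0 *\<^sub>R axis i 1)) (at 0)"
    using assms by (intro DERIV_mult has_real_derivative_partial_deriv)
  then show ?thesis
    unfolding partial_deriv_def[of i "\<lambda>x. f x * g x"] by (auto dest!: DERIV_imp_deriv)
qed

lemma partial_deriv_cmult:
  assumes "partially_differentiable_on S f" "x \<in> S"
  shows "partial_deriv i (\<lambda>x. c * f x) x = c * partial_deriv i f x"
  using partial_deriv_mult[OF partially_differentiable_on_const assms] by (simp add: partial_deriv_const)

lemma partial_deriv_sum:
  assumes "finite I" "\<And>i. i \<in> I \<Longrightarrow> partially_differentiable_on S (f i)" "x \<in> S"
  shows "partial_deriv j (\<lambda>x. \<Sum>i\<in>I. f i x) x = (\<Sum>i\<in>I. partial_deriv j (f i) x)"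
  using assms(1,2)
proof (induction I rule: finite_induct)
  case empty
  then show ?case by (simp add: partial_deriv_const)
next
  case (insert a I)
  have "partial_deriv j (\<lambda>x. f a x + (\<Sum>i\<in>I. f i x)) x
      = partial_deriv j (f a) x + partial_deriv j (\<lambda>x. \<Sum>i\<in>I. f i x) x"
    by (rule partial_deriv_add[OF _ partially_differentiable_on_sum[OF insert.hyps(1)] assms(3)])
      (use insert.prems in auto)
  then show ?case using insert by simp
qed

lemma smooth_upto_const: "smooth_upto n S (\<lambda>x. c)"
  by (induction n arbitrary: c)
    (simp_all add: smooth_upto_0 smooth_upto_Suc partially_differentiable_on_const partial_deriv_const)

lemma smooth_upto_add:
  assumes "open S"
  shows "smooth_upto n S f \<Longrightarrow> smooth_upto n S g \<Longrightarrow> smooth_upto n S (\<lambda>x. f x + g x)"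
proof (induction n arbitrary: f g)
  case 0
  then show ?case by (simp add: smooth_upto_0 partially_differentiable_on_add)
next
  case (Suc n)
  have f: "partially_differentiable_on S f" and g: "partially_differentiable_on S g"
    using Suc.prems by (simp_all add: smooth_upto_Suc)
  have fg': "smooth_upto n S (\<lambda>x. partial_deriv i f x + partial_deriv i g x)" for i
    using Suc.prems by (intro Suc.IH) (simp_all add: smooth_upto_Suc)
  have "smooth_upto n S (partial_deriv i (\<lambda>x. f x + g x)) \<longleftrightarrow>
      smooth_upto n S (\<lambda>x. partial_deriv i f x + partial_deriv i g x)" for i
    by (rule smooth_upto_cong[OF assms partial_deriv_add[OF f g]])
  with fg' show ?case
    by (simp add: smooth_upto_Suc partially_differentiable_on_add f g)
qed

lemma smooth_upto_mult:
  assumes "open S"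
  shows "smooth_upto n S f \<Longrightarrow> smooth_upto n S g \<Longrightarrow> smooth_upto n S (\<lambda>x. f x * g x)"
proof (induction n arbitrary: f g)
  case 0
  then show ?case by (simp add: smooth_upto_0 partially_differentiable_on_mult)
next
  case (Suc n)
  have f: "partially_differentiable_on S f" and g: "partially_differentiable_on S g"
    using Suc.prems by (simp_all add: smooth_upto_Suc)
  have "smooth_upto n S (\<lambda>x. partial_deriv i f x * g x + f x * partial_deriv i g x)" for i
    using Suc.prems
    by (intro smooth_upto_add[OF assms] Suc.IH) (simp_all add: smooth_upto_Suc smooth_upto_Suc_imp)
  moreover have "smooth_upto n S (partial_deriv i (\<lambda>x. f x * g x)) \<longleftrightarrow>
      smooth_upto n S (\<lambda>x. partial_deriv i f x * g x + f x * partial_deriv i g x)" for i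
    by (rule smooth_upto_cong[OF assms partial_deriv_mult[OF f g]])
  ultimately show ?case
    by (simp add: smooth_upto_Suc partially_differentiable_on_mult f g)
qed

lemma smooth_on_const: "smooth_on S (\<lambda>x. c)"
  by (simp add: smooth_on_iff_smooth_upto smooth_upto_const)

lemma smooth_on_coord: "smooth_on S (\<lambda>y. y $ j)"
proof -
  have "smooth_upto n S (\<lambda>y. y $ j)" for n
    by (cases n) (auto simp: smooth_upto_0 smooth_upto_Suc partially_differentiable_on_coord
        partial_deriv_coord smooth_upto_const)
  then show ?thesis by (simp add: smooth_on_iff_smooth_upto)
qed

lemma smooth_on_add: "open S \<Longrightarrow> smooth_on S f \<Longrightarrow> smooth_on S g \<Longrightarrow> smooth_on S (\<lambda>x. f x + g x)"
  by (simp add: smooth_on_iff_smooth_upto smooth_upto_add)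

lemma smooth_on_mult: "open S \<Longrightarrow> smooth_on S f \<Longrightarrow> smooth_on S g \<Longrightarrow> smooth_on S (\<lambda>x. f x * g x)"
  by (simp add: smooth_on_iff_smooth_upto smooth_upto_mult)

lemma smooth_on_cmult: "open S \<Longrightarrow> smooth_on S f \<Longrightarrow> smooth_on S (\<lambda>x. c * f x)"
  using smooth_on_mult[OF _ smooth_on_const] by blast

lemma smooth_on_sum:
  assumes "open S" "finite I" "\<And>i. i \<in> I \<Longrightarrow> smooth_on S (f i)"
  shows "smooth_on S (\<lambda>x. \<Sum>i\<in>I. f i x)"
  using assms(2,3)
  by (induction I rule: finite_induct) (auto intro!: smooth_on_const smooth_on_add[OF assms(1)])

lemma sum_coord_squares: "(\<Sum>j\<in>UNIV. x $ j * x $ j) = norm (x::real^'n::finite) ^ 2"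
  by (simp add: power2_norm_eq_inner inner_vec_def)

lemma has_real_derivative_norm_powr_line:
  fixes y :: "real^'n::finite"
  assumes "y \<noteq> 0"
  shows "((\<lambda>t. norm (y + t *\<^sub>R axis i 1) powr b) has_real_derivative b * y $ i * norm y powr (b - 2)) (at 0)"
proof -
  have line: "((\<lambda>t::real. y + t *\<^sub>R axis i 1) has_derivative (\<lambda>t. t *\<^sub>R axis i 1)) (at 0)"
    by (auto intro!: derivative_eq_intros)
  have norm: "(norm has_derivative (\<lambda>h. inner h (sgn y))) (at ((\<lambda>t::real. y + t *\<^sub>R axis i 1) 0))"
    using has_derivative_norm[OF assms] by simp
  have "((\<lambda>t. norm (y + t *\<^sub>R axis i 1)) has_derivative (\<lambda>t. inner (t *\<^sub>R axis i 1) (sgn y))) (at 0)"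
    using has_derivative_compose[OF line norm] by (simp add: o_def)
  moreover have "(\<lambda>t. inner (t *\<^sub>R axis i 1) (sgn y)) = (*) (y $ i / norm y)"
    by (simp add: fun_eq_iff sgn_div_norm inner_axis' field_simps)
  ultimately have "((\<lambda>t. norm (y + t *\<^sub>R axis i 1)) has_real_derivative y $ i / norm y) (at 0)"
    by (simp add: has_field_derivative_def)
  then have "((\<lambda>t. norm (y + t *\<^sub>R axis i 1) powr b) has_real_derivative
      b * norm (y + 0 *\<^sub>R axis i 1) powr (b - of_nat 1) * (y $ i / norm y)) (at 0)"
    by (rule DERIV_fun_powr) (use assms in simp)
  moreover have "b * norm y powr (b - 1) * (y $ i / norm y) = b * y $ i * norm y powr (b - 2)"
    using assms by (simp add: powr_diff field_simps powr_add[symmetric] power2_eq_square)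
  ultimately show ?thesis by simp
qed

lemma partial_deriv_norm_powr:
  fixes y :: "real^'n::finite"
  assumes "y \<noteq> 0"
  shows "partial_deriv i (\<lambda>y. norm y powr b) y = b * y $ i * norm y powr (b - 2)"
  unfolding partial_deriv_def by (rule DERIV_imp_deriv[OF has_real_derivative_norm_powr_line[OF assms]])

lemma partially_differentiable_on_norm_powr:
  "partially_differentiable_on (-{0}) (\<lambda>y::real^'n::finite. norm y powr b)"
proof -
  have "continuous_on (-{0}) (\<lambda>y::real^'n. norm y powr b)"
    by (intro continuous_intros) auto
  then show ?thesis
    unfolding partially_differentiable_on_def real_differentiable_def
    using has_real_derivative_norm_powr_line by auto
qed

lemma smooth_on_norm_powr: "smooth_on (-{0}) (\<lambda>y::real^'n::finite. norm y powr b)"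
proof -
  have "smooth_upto n (-{0}) (\<lambda>y::real^'n. norm y powr b)" for n
  proof (induction n arbitrary: b)
    case 0
    then show ?case by (simp add: smooth_upto_0 partially_differentiable_on_norm_powr)
  next
    case (Suc n)
    have "smooth_upto n (-{0}) (\<lambda>y::real^'n. b * y $ i * norm y powr (b - 2))" for i
      using smooth_on_coord[unfolded smooth_on_iff_smooth_upto]
      by (intro smooth_upto_mult smooth_upto_const Suc.IH) auto
    moreover have "smooth_upto n (-{0}) (partial_deriv i (\<lambda>y::real^'n. norm y powr b)) \<longleftrightarrow>
        smooth_upto n (-{0}) (\<lambda>y. b * y $ i * norm y powr (b - 2))" for i
      by (rule smooth_upto_cong) (auto simp: partial_deriv_norm_powr)
    ultimately show ?case
      by (simp add: smooth_upto_Suc partially_differentiable_on_norm_powr)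
  qed
  then show ?thesis by (simp add: smooth_on_iff_smooth_upto)
qed

section \<open>Continuous partial derivatives give the total derivative\<close>

lemma MVT_symmetric:
  fixes g g' :: "real \<Rightarrow> real"
  assumes "\<And>t. \<bar>t\<bar> \<le> \<bar>a\<bar> \<Longrightarrow> (g has_real_derivative g' t) (at t)"
  shows "\<exists>t. \<bar>t\<bar> \<le> \<bar>a\<bar> \<and> g a - g 0 = a * g' t"
proof (cases a "0::real" rule: linorder_cases)
  case less
  then obtain z where "a < z" "z < 0" "g 0 - g a = (0 - a) * g' z"
    using MVT2[of a 0 g g'] assms by force
  then show ?thesis by (intro exI[of _ z]) (auto simp: algebra_simps)
next
  case greater
  then obtain z where "0 < z" "z < a" "g a - g 0 = (a - 0) * g' z"
    using MVT2[of 0 a g g'] assms by force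
  then show ?thesis by (intro exI[of _ z]) auto
qed auto

lemma partial_increment_estimate:
  assumes F: "partially_differentiable_on S F"
    and line: "\<And>t. \<bar>t\<bar> \<le> \<bar>a\<bar> \<Longrightarrow> p + t *\<^sub>R axis j 1 \<in> S"
    and close: "\<And>t. \<bar>t\<bar> \<le> \<bar>a\<bar> \<Longrightarrow> \<bar>partial_deriv j F (p + t *\<^sub>R axis j 1) - c\<bar> \<le> e"
  shows "\<bar>F (p + a *\<^sub>R axis j 1) - F p - a * c\<bar> \<le> \<bar>a\<bar> * e"
proof -
  have "((\<lambda>t. F (p + t *\<^sub>R axis j 1)) has_real_derivative partial_deriv j F (p + t *\<^sub>R axis j 1)) (at t)"
    if "\<bar>t\<bar> \<le> \<bar>a\<bar>" for t
    by (rule has_real_derivative_partial_deriv_shift[OF F line[OF that]])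
  then obtain t where t: "\<bar>t\<bar> \<le> \<bar>a\<bar>"
      "F (p + a *\<^sub>R axis j 1) - F (p + 0 *\<^sub>R axis j 1) = a * partial_deriv j F (p + t *\<^sub>R axis j 1)"
    using MVT_symmetric[of a "\<lambda>t. F (p + t *\<^sub>R axis j 1)" "\<lambda>t. partial_deriv j F (p + t *\<^sub>R axis j 1)"]
    by blast
  then have "\<bar>F (p + a *\<^sub>R axis j 1) - F p - a * c\<bar> = \<bar>a\<bar> * \<bar>partial_deriv j F (p + t *\<^sub>R axis j 1) - c\<bar>"
    by (simp add: abs_mult[symmetric] algebra_simps)
  also have "\<dots> \<le> \<bar>a\<bar> * e"
    using close[OF t(1)] by (simp add: mult_left_mono)
  finally show ?thesis .
qed

lemma norm_partial_sum_axis_le: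
  fixes h :: "real^'n::finite"
  assumes "\<bar>t\<bar> \<le> \<bar>h $ j\<bar>"
  shows "norm ((\<Sum>i\<in>J. h $ i *\<^sub>R axis i (1::real)) + t *\<^sub>R axis j 1) \<le> (real (card J) + 1) * norm h"
proof -
  have "norm ((\<Sum>i\<in>J. h $ i *\<^sub>R axis i (1::real)) + t *\<^sub>R axis j 1)
      \<le> (\<Sum>i\<in>J. norm (h $ i *\<^sub>R axis i (1::real))) + norm (t *\<^sub>R axis j (1::real))"
    using norm_triangle_ineq[of "\<Sum>i\<in>J. h $ i *\<^sub>R axis i (1::real)" "t *\<^sub>R axis j 1"]
      norm_sum[of "\<lambda>i. h $ i *\<^sub>R axis i (1::real)" J] by linarith
  also have "\<dots> \<le> (\<Sum>i\<in>J. norm h) + norm h"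
  proof (intro add_mono sum_mono)
    show "norm (t *\<^sub>R axis j (1::real)) \<le> norm h"
      using assms component_le_norm_cart[of h j] by simp
  qed (simp add: component_le_norm_cart)
  finally show ?thesis by (simp add: algebra_simps)
qed

lemma continuous_partial_deriv_near:
  assumes "open S" "x \<in> S" "continuous_on S (partial_deriv j F)" "e > 0"
  obtains \<delta> where "\<delta> > 0" "ball x \<delta> \<subseteq> S"
    "\<And>z. z \<in> ball x \<delta> \<Longrightarrow> \<bar>partial_deriv j F z - partial_deriv j F x\<bar> \<le> e"
proof -
  obtain r where r: "r > 0" "ball x r \<subseteq> S"
    using assms(1,2) openE by blast
  have "continuous (at x) (partial_deriv j F)"
    using assms(1-3) continuous_on_eq_continuous_at by blast
  then obtain d where d: "d > 0" "\<And>z. dist z x < d \<Longrightarrow> dist (partial_deriv j F z) (partial_deriv j F x) < e"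
    unfolding continuous_at_eps_delta using assms(4) by blast
  show ?thesis
  proof
    show "min r d > 0" using r d by simp
    show "ball x (min r d) \<subseteq> S" using r by auto
    show "\<bar>partial_deriv j F z - partial_deriv j F x\<bar> \<le> e" if "z \<in> ball x (min r d)" for z
      using d(2)[of z] that by (simp add: dist_commute dist_real_def)
  qed
qed

lemma partial_sums_linear_approx:
  fixes F :: "real^'n::finite \<Rightarrow> real"
  assumes S: "open S" "x \<in> S" and F: "partially_differentiable_on S F"
    and F': "\<And>j. continuous_on S (partial_deriv j F)"
    and J: "finite J" and e: "e > 0"
  shows "\<exists>d>0. \<forall>h::real^'n. norm h < d \<longrightarrow>
    \<bar>F (x + (\<Sum>i\<in>J. h $ i *\<^sub>R axis i 1)) - F x - (\<Sum>i\<in>J. h $ i * partial_deriv i F x)\<bar> \<le> e * norm h"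
  using J e
proof (induction J arbitrary: e rule: finite_induct)
  case empty
  then show ?case by (auto intro: exI[of _ 1])
next
  case (insert j J)
  obtain d1 where d1: "d1 > 0" "\<And>h::real^'n. norm h < d1 \<Longrightarrow>
      \<bar>F (x + (\<Sum>i\<in>J. h $ i *\<^sub>R axis i 1)) - F x - (\<Sum>i\<in>J. h $ i * partial_deriv i F x)\<bar> \<le> e/2 * norm h"
    using insert.IH[of "e/2"] insert.prems by auto
  obtain \<delta> where \<delta>: "\<delta> > 0" "ball x \<delta> \<subseteq> S"
      "\<And>z. z \<in> ball x \<delta> \<Longrightarrow> \<bar>partial_deriv j F z - partial_deriv j F x\<bar> \<le> e/2"
    using continuous_partial_deriv_near[OF S F'] insert.prems by (metis half_gt_zero)
  define C where "C = real CARD('n) + 1"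
  have C: "C \<ge> 1" and card: "real (card J) + 1 \<le> C"
    by (simp_all add: C_def card_mono)
  show ?case
  proof (intro exI[of _ "min d1 (\<delta> / C)"] conjI allI impI)
    show "min d1 (\<delta> / C) > 0" using d1 \<delta> C by simp
    fix h :: "real^'n"
    assume h: "norm h < min d1 (\<delta> / C)"
    define p where "p = x + (\<Sum>i\<in>J. h $ i *\<^sub>R axis i 1)"
    have near: "p + t *\<^sub>R axis j 1 \<in> ball x \<delta>" if "\<bar>t\<bar> \<le> \<bar>h $ j\<bar>" for t
    proof -
      have "dist (p + t *\<^sub>R axis j 1) x \<le> (real (card J) + 1) * norm h"
        using norm_partial_sum_axis_le[OF that, of J] by (simp add: p_def dist_norm add.assoc)
      also have "\<dots> \<le> C * norm h"
        using card by (simp add: mult_right_mono)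
      also have "\<dots> < \<delta>"
        using h C by (simp add: field_simps)
      finally show ?thesis by (simp add: dist_commute)
    qed
    have "\<bar>F (p + h $ j *\<^sub>R axis j 1) - F p - h $ j * partial_deriv j F x\<bar> \<le> \<bar>h $ j\<bar> * (e/2)"
      using near \<delta>(2) by (intro partial_increment_estimate[OF F] \<delta>(3)) blast+
    also have "\<dots> \<le> e/2 * norm h"
      using component_le_norm_cart[of h j] insert.prems by (simp add: mult_right_mono mult.commute)
    finally have step: "\<bar>F (p + h $ j *\<^sub>R axis j 1) - F p - h $ j * partial_deriv j F x\<bar> \<le> e/2 * norm h" .
    have prev: "\<bar>F p - F x - (\<Sum>i\<in>J. h $ i * partial_deriv i F x)\<bar> \<le> e/2 * norm h"
      using d1(2)[of h] h by (simp add: p_def)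
    have eq: "x + (h $ j *\<^sub>R axis j 1 + (\<Sum>i\<in>J. h $ i *\<^sub>R axis i 1)) = p + h $ j *\<^sub>R axis j 1"
      by (simp add: p_def algebra_simps)
    show "\<bar>F (x + (\<Sum>i\<in>insert j J. h $ i *\<^sub>R axis i 1)) - F x
        - (\<Sum>i\<in>insert j J. h $ i * partial_deriv i F x)\<bar> \<le> e * norm h"
      using step prev unfolding sum.insert[OF insert.hyps] eq abs_le_iff by linarith
  qed
qed

lemma has_derivative_of_continuous_partials:
  fixes F :: "real^'n::finite \<Rightarrow> real"
  assumes "open S" "x \<in> S" "partially_differentiable_on S F"
    "\<And>j. continuous_on S (partial_deriv j F)"
  shows "(F has_derivative (\<lambda>h. \<Sum>j\<in>UNIV. h $ j * partial_deriv j F x)) (at x)"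
  unfolding has_derivative_at_alt
proof (intro conjI allI impI)
  show "bounded_linear (\<lambda>h::real^'n. \<Sum>j\<in>UNIV. h $ j * partial_deriv j F x)"
    by (intro bounded_linear_sum bounded_linear_compose[OF bounded_linear_mult_left bounded_linear_vec_nth])
  fix e :: real
  assume "e > 0"
  from partial_sums_linear_approx[OF assms finite_class.finite_UNIV this]
  obtain d where d: "d > 0" "\<And>h::real^'n. norm h < d \<Longrightarrow>
      \<bar>F (x + (\<Sum>i\<in>UNIV. h $ i *\<^sub>R axis i 1)) - F x - (\<Sum>i\<in>UNIV. h $ i * partial_deriv i F x)\<bar>
        \<le> e * norm h"
    by blast
  show "\<exists>d>0. \<forall>y. norm (y - x) < d \<longrightarrow>
      norm (F y - F x - (\<Sum>j\<in>UNIV. (y - x) $ j * partial_deriv j F x)) \<le> e * norm (y - x)"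
  proof (intro exI[of _ d] conjI allI impI d(1))
    fix y
    assume "norm (y - x) < d"
    moreover have "x + (\<Sum>i\<in>UNIV. (y - x) $ i *\<^sub>R axis i 1) = y"
      using basis_expansion[of "y - x", unfolded scalar_mult_eq_scaleR] by simp
    ultimately show "norm (F y - F x - (\<Sum>j\<in>UNIV. (y - x) $ j * partial_deriv j F x)) \<le> e * norm (y - x)"
      using d(2) by fastforce
  qed
qed

section \<open>Homogeneous functions\<close>

definition positively_homogeneous :: "real \<Rightarrow> (real^'n::finite \<Rightarrow> real) \<Rightarrow> bool" where
  "positively_homogeneous a G \<longleftrightarrow> (\<forall>y t. y \<noteq> 0 \<longrightarrow> t > 0 \<longrightarrow> G (t *\<^sub>R y) = t powr a * G y)"

lemma positively_homogeneous_sum: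
  "(\<And>i. i \<in> I \<Longrightarrow> positively_homogeneous a (f i)) \<Longrightarrow>
    positively_homogeneous a (\<lambda>y. \<Sum>i\<in>I. f i y)"
  unfolding positively_homogeneous_def by (simp add: sum_distrib_left)

lemma positively_homogeneous_coord_mult:
  "positively_homogeneous a G \<Longrightarrow> positively_homogeneous (a + 1) (\<lambda>y. y $ i * G y)"
  unfolding positively_homogeneous_def by (simp add: powr_add)

lemma euler_homogeneous:
  fixes G :: "real^'n::finite \<Rightarrow> real"
  assumes G: "partially_differentiable_on (-{0}) G" "\<And>j. continuous_on (-{0}) (partial_deriv j G)"
    and hom: "positively_homogeneous a G" and y: "y \<noteq> 0"
  shows "(\<Sum>j\<in>UNIV. y $ j * partial_deriv j G y) = a * G y"
proof -
  define E where "E = (\<Sum>j\<in>UNIV. y $ j * partial_deriv j G y)"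
  have line: "((\<lambda>t::real. y + t *\<^sub>R y) has_derivative (\<lambda>t. t *\<^sub>R y)) (at 0)"
    by (auto intro!: derivative_eq_intros)
  have "(G has_derivative (\<lambda>h. \<Sum>j\<in>UNIV. h $ j * partial_deriv j G y)) (at y)"
    by (rule has_derivative_of_continuous_partials[OF _ _ G]) (use y in auto)
  then have "(G has_derivative (\<lambda>h. \<Sum>j\<in>UNIV. h $ j * partial_deriv j G y))
      (at ((\<lambda>t::real. y + t *\<^sub>R y) 0))"
    by simp
  from has_derivative_compose[OF line this]
  have "((\<lambda>t. G (y + t *\<^sub>R y)) has_derivative (\<lambda>t. \<Sum>j\<in>UNIV. (t *\<^sub>R y) $ j * partial_deriv j G y)) (at 0)"
    by (simp add: o_def)
  moreover have "(\<lambda>t. \<Sum>j\<in>UNIV. (t *\<^sub>R y) $ j * partial_deriv j G y) = (*) E"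
    by (simp add: fun_eq_iff E_def sum_distrib_left mult_ac)
  ultimately have radial: "((\<lambda>t. G (y + t *\<^sub>R y)) has_real_derivative E) (at 0)"
    by (simp add: has_field_derivative_def)
  have "\<forall>\<^sub>F t in nhds (0::real). t \<in> {-1<..}"
    by (rule eventually_nhds_in_open) auto
  then have ev: "\<forall>\<^sub>F t in nhds (0::real). G (y + t *\<^sub>R y) = (1 + t) powr a * G y"
  proof (rule eventually_mono)
    fix t :: real
    assume "t \<in> {-1<..}"
    then have "G ((1 + t) *\<^sub>R y) = (1 + t) powr a * G y"
      using hom y by (simp add: positively_homogeneous_def)
    then show "G (y + t *\<^sub>R y) = (1 + t) powr a * G y" by (simp add: algebra_simps)
  qed
  have "((\<lambda>t. (1 + t) powr a * G y) has_real_derivative a * G y) (at 0)"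
    by (auto intro!: derivative_eq_intros)
  then have "((\<lambda>t. G (y + t *\<^sub>R y)) has_real_derivative a * G y) (at 0)"
    using DERIV_cong_ev[OF refl ev refl] by simp
  with radial show ?thesis
    unfolding E_def by (rule DERIV_unique)
qed

lemma positively_homogeneous_partial_deriv:
  fixes G :: "real^'n::finite \<Rightarrow> real"
  assumes G: "partially_differentiable_on (-{0}) G" and hom: "positively_homogeneous a G"
  shows "positively_homogeneous (a - 1) (partial_deriv i G)"
  unfolding positively_homogeneous_def
proof (intro allI impI)
  fix y :: "real^'n" and t :: real
  assume y: "y \<noteq> 0" and t: "t > 0"
  have "\<forall>\<^sub>F s in nhds (0::real). y + s *\<^sub>R (inverse t *\<^sub>R axis i 1) \<in> -{0}"
    by (rule eventually_line_in_open) (use y in auto)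
  then have ev: "\<forall>\<^sub>F s in nhds (0::real).
      G (t *\<^sub>R y + s *\<^sub>R axis i 1) = t powr a * G (y + (s / t) *\<^sub>R axis i 1)"
  proof (rule eventually_mono)
    fix s :: real
    assume "y + s *\<^sub>R inverse t *\<^sub>R axis i 1 \<in> - {0}"
    moreover have "t *\<^sub>R y + s *\<^sub>R axis i 1 = t *\<^sub>R (y + (s / t) *\<^sub>R axis i 1)"
      using t by (simp add: algebra_simps)
    ultimately show "G (t *\<^sub>R y + s *\<^sub>R axis i 1) = t powr a * G (y + (s / t) *\<^sub>R axis i 1)"
      using hom t by (simp add: positively_homogeneous_def divide_inverse mult.commute)
  qed
  have "((\<lambda>s. s / t) has_real_derivative inverse t) (at 0)"
    by (auto intro!: derivative_eq_intros simp: divide_inverse)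
  moreover have "((\<lambda>u. G (y + u *\<^sub>R axis i 1)) has_real_derivative partial_deriv i G y)
      (at ((\<lambda>s. s / t) 0))"
    using has_real_derivative_partial_deriv[OF G] y by simp
  ultimately have "((\<lambda>s. t powr a * G (y + (s / t) *\<^sub>R axis i 1)) has_real_derivative
      t powr a * (partial_deriv i G y * inverse t)) (at 0)"
    by (intro DERIV_cmult DERIV_chain')
  then have "((\<lambda>s. G (t *\<^sub>R y + s *\<^sub>R axis i 1)) has_real_derivative
      t powr a * (partial_deriv i G y * inverse t)) (at 0)"
    using DERIV_cong_ev[OF refl ev refl] by simp
  then have "partial_deriv i G (t *\<^sub>R y) = t powr a * (partial_deriv i G y * inverse t)"
    unfolding partial_deriv_def by (rule DERIV_imp_deriv)
  also have "\<dots> = t powr (a - 1) * partial_deriv i G y"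
    using t by (simp add: powr_diff divide_inverse)
  finally show "partial_deriv i G (t *\<^sub>R y) = t powr (a - 1) * partial_deriv i G y" .
qed

section \<open>Symmetry of second partial derivatives\<close>

lemma mixed_difference_MVT:
  fixes F :: "real^'n::finite \<Rightarrow> real"
  assumes h: "h > 0"
    and square: "\<And>s t. 0 \<le> s \<Longrightarrow> s \<le> h \<Longrightarrow> 0 \<le> t \<Longrightarrow> t \<le> h \<Longrightarrow>
      x + s *\<^sub>R axis i 1 + t *\<^sub>R axis j 1 \<in> S"
    and F: "partially_differentiable_on S F" "partially_differentiable_on S (partial_deriv i F)"
  obtains s t where "0 < s" "s < h" "0 < t" "t < h"
    "F (x + h *\<^sub>R axis i 1 + h *\<^sub>R axis j 1) - F (x + h *\<^sub>R axis i 1) - F (x + h *\<^sub>R axis j 1) + F x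
      = h * h * partial_deriv j (partial_deriv i F) (x + s *\<^sub>R axis i 1 + t *\<^sub>R axis j 1)"
proof -
  define g where "g s = F ((x + h *\<^sub>R axis j 1) + s *\<^sub>R axis i 1) - F (x + s *\<^sub>R axis i 1)" for s
  define g' where "g' s = partial_deriv i F ((x + h *\<^sub>R axis j 1) + s *\<^sub>R axis i 1)
      - partial_deriv i F (x + s *\<^sub>R axis i 1)" for s
  have "DERIV g s :> g' s" if "0 \<le> s" "s \<le> h" for s
    unfolding g_def g'_def
    using square[of s h] square[of s 0] that h
    by (intro DERIV_diff has_real_derivative_partial_deriv_shift[OF F(1)]) (simp_all add: algebra_simps)
  then obtain s where s: "0 < s" "s < h" "g h - g 0 = (h - 0) * g' s"
    using MVT2[of 0 h g g'] h by auto
  define k where "k t = partial_deriv i F ((x + s *\<^sub>R axis i 1) + t *\<^sub>R axis j 1)" for t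
  have "DERIV k t :> partial_deriv j (partial_deriv i F) ((x + s *\<^sub>R axis i 1) + t *\<^sub>R axis j 1)"
    if "0 \<le> t" "t \<le> h" for t
    unfolding k_def using square[of s t] that s
    by (intro has_real_derivative_partial_deriv_shift[OF F(2)]) simp
  then obtain t where t: "0 < t" "t < h"
    "k h - k 0 = (h - 0) * partial_deriv j (partial_deriv i F) ((x + s *\<^sub>R axis i 1) + t *\<^sub>R axis j 1)"
    using MVT2[of 0 h k "\<lambda>t. partial_deriv j (partial_deriv i F) ((x + s *\<^sub>R axis i 1) + t *\<^sub>R axis j 1)"] h
    by auto
  have "g' s = k h - k 0"
    unfolding g'_def k_def by (simp add: algebra_simps)
  moreover have "g h - g 0 = F (x + h *\<^sub>R axis i 1 + h *\<^sub>R axis j 1) - F (x + h *\<^sub>R axis i 1)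
      - F (x + h *\<^sub>R axis j 1) + F x"
    unfolding g_def by (simp add: algebra_simps)
  ultimately show ?thesis
    using that[OF s(1,2) t(1,2)] s(3) t(3) by simp
qed

lemma mixed_difference_approx:
  fixes F :: "real^'n::finite \<Rightarrow> real"
  assumes S: "open S" "x \<in> S"
    and F: "partially_differentiable_on S F" "partially_differentiable_on S (partial_deriv i F)"
    and F'': "continuous_on S (partial_deriv j (partial_deriv i F))" and e: "e > 0"
  obtains \<delta> where "\<delta> > 0" "\<And>h. 0 < h \<Longrightarrow> h < \<delta> \<Longrightarrow>
    \<bar>(F (x + h *\<^sub>R axis i 1 + h *\<^sub>R axis j 1) - F (x + h *\<^sub>R axis i 1) - F (x + h *\<^sub>R axis j 1) + F x)
      / (h * h) - partial_deriv j (partial_deriv i F) x\<bar> \<le> e"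
proof -
  obtain \<delta> where \<delta>: "\<delta> > 0" "ball x \<delta> \<subseteq> S"
      "\<And>z. z \<in> ball x \<delta> \<Longrightarrow> \<bar>partial_deriv j (partial_deriv i F) z - partial_deriv j (partial_deriv i F) x\<bar> \<le> e"
    using continuous_partial_deriv_near[OF S F'' e] by blast
  show ?thesis
  proof (rule that[of "\<delta> / 2"])
    fix h :: real
    assume h: "0 < h" "h < \<delta> / 2"
    have square: "x + s *\<^sub>R axis i 1 + t *\<^sub>R axis j 1 \<in> ball x \<delta>"
      if "0 \<le> s" "s \<le> h" "0 \<le> t" "t \<le> h" for s t
    proof -
      have "dist (x + s *\<^sub>R axis i 1 + t *\<^sub>R axis j 1) x \<le> \<bar>s\<bar> + \<bar>t\<bar>"
        using norm_triangle_ineq[of "s *\<^sub>R axis i (1::real)" "t *\<^sub>R axis j 1"]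
        by (simp add: dist_norm add.assoc)
      then show ?thesis
        using that h by (simp add: dist_commute)
    qed
    have "x + s *\<^sub>R axis i 1 + t *\<^sub>R axis j 1 \<in> S" if "0 \<le> s" "s \<le> h" "0 \<le> t" "t \<le> h" for s t
      using square[OF that] \<delta>(2) by blast
    then obtain s t where "0 < s" "s < h" "0 < t" "t < h"
      and D: "F (x + h *\<^sub>R axis i 1 + h *\<^sub>R axis j 1) - F (x + h *\<^sub>R axis i 1) - F (x + h *\<^sub>R axis j 1) + F x
        = h * h * partial_deriv j (partial_deriv i F) (x + s *\<^sub>R axis i 1 + t *\<^sub>R axis j 1)"
      by (rule mixed_difference_MVT[OF h(1) _ F])
    then show "\<bar>(F (x + h *\<^sub>R axis i 1 + h *\<^sub>R axis j 1) - F (x + h *\<^sub>R axis i 1) - F (x + h *\<^sub>R axis j 1) + F x)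
        / (h * h) - partial_deriv j (partial_deriv i F) x\<bar> \<le> e"
      using \<delta>(3)[OF square[of s t]] h(1) by simp
  qed (use \<delta> in simp)
qed

lemma partial_deriv_commute:
  fixes F :: "real^'n::finite \<Rightarrow> real"
  assumes S: "open S" "x \<in> S"
    and F: "partially_differentiable_on S F" "partially_differentiable_on S (partial_deriv i F)"
      "partially_differentiable_on S (partial_deriv j F)"
    and F'': "continuous_on S (partial_deriv j (partial_deriv i F))"
      "continuous_on S (partial_deriv i (partial_deriv j F))"
  shows "partial_deriv j (partial_deriv i F) x = partial_deriv i (partial_deriv j F) x"
proof (rule ccontr)
  define A B where "A = partial_deriv j (partial_deriv i F) x" and "B = partial_deriv i (partial_deriv j F) x"
  assume "partial_deriv j (partial_deriv i F) x \<noteq> partial_deriv i (partial_deriv j F) x"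
  then have e: "\<bar>A - B\<bar> / 3 > 0" by (simp add: A_def B_def)
  obtain \<delta>1 where \<delta>1: "\<delta>1 > 0" "\<And>h. 0 < h \<Longrightarrow> h < \<delta>1 \<Longrightarrow>
      \<bar>(F (x + h *\<^sub>R axis i 1 + h *\<^sub>R axis j 1) - F (x + h *\<^sub>R axis i 1) - F (x + h *\<^sub>R axis j 1) + F x)
        / (h * h) - A\<bar> \<le> \<bar>A - B\<bar> / 3"
    using mixed_difference_approx[OF S F(1,2) F''(1) e] unfolding A_def by blast
  obtain \<delta>2 where \<delta>2: "\<delta>2 > 0" "\<And>h. 0 < h \<Longrightarrow> h < \<delta>2 \<Longrightarrow>
      \<bar>(F (x + h *\<^sub>R axis j 1 + h *\<^sub>R axis i 1) - F (x + h *\<^sub>R axis j 1) - F (x + h *\<^sub>R axis i 1) + F x)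
        / (h * h) - B\<bar> \<le> \<bar>A - B\<bar> / 3"
    using mixed_difference_approx[OF S F(1,3) F''(2) e] unfolding B_def by blast
  define h where "h = min \<delta>1 \<delta>2 / 2"
  have h: "0 < h" "h < \<delta>1" "h < \<delta>2"
    using \<delta>1(1) \<delta>2(1) by (auto simp: h_def)
  have swap: "F (x + h *\<^sub>R axis j 1 + h *\<^sub>R axis i 1) - F (x + h *\<^sub>R axis j 1) - F (x + h *\<^sub>R axis i 1) + F x
      = F (x + h *\<^sub>R axis i 1 + h *\<^sub>R axis j 1) - F (x + h *\<^sub>R axis i 1) - F (x + h *\<^sub>R axis j 1) + F x"
    by (simp add: algebra_simps)
  obtain q where "\<bar>q - A\<bar> \<le> \<bar>A - B\<bar> / 3" "\<bar>q - B\<bar> \<le> \<bar>A - B\<bar> / 3"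
    using \<delta>1(2)[OF h(1,2)] \<delta>2(2)[OF h(1,3), unfolded swap] by blast
  then show False
    using e by (auto simp: abs_if split: if_splits)
qed

section \<open>The Euclidean Laplacian\<close>

lemma euclid_laplacian_cong:
  assumes "open S" "x \<in> S" "\<And>y. y \<in> S \<Longrightarrow> f y = g y"
  shows "euclid_laplacian f x = euclid_laplacian g x"
  unfolding euclid_laplacian_def
proof (rule sum.cong[OF refl])
  fix j
  have "\<And>z. z \<in> S \<Longrightarrow> partial_deriv j f z = partial_deriv j g z"
    by (rule partial_deriv_cong[OF assms(1) _ assms(3)])
  then show "partial_deriv j (partial_deriv j f) x = partial_deriv j (partial_deriv j g) x"
    by (rule partial_deriv_cong[OF assms(1,2)])
qed

lemma euclid_laplacian_const: "euclid_laplacian (\<lambda>y. c) x = 0"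
  unfolding euclid_laplacian_def by (simp add: partial_deriv_const)

lemma euclid_laplacian_coord: "euclid_laplacian (\<lambda>y. y $ i) x = 0"
  unfolding euclid_laplacian_def by (simp add: partial_deriv_coord partial_deriv_const)

lemma smooth_on_euclid_laplacian:
  "open S \<Longrightarrow> smooth_on S f \<Longrightarrow> smooth_on S (euclid_laplacian f)"
  unfolding euclid_laplacian_def[abs_def]
  by (intro smooth_on_sum smooth_on_partial_deriv) auto

lemma second_partial_deriv_mult:
  assumes S: "open S" "x \<in> S" and f: "smooth_on S f" and g: "smooth_on S g"
  shows "partial_deriv j (partial_deriv j (\<lambda>y. f y * g y)) x
    = partial_deriv j (partial_deriv j f) x * g x + 2 * (partial_deriv j f x * partial_deriv j g x)
      + f x * partial_deriv j (partial_deriv j g) x"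
proof -
  have f0: "partially_differentiable_on S f" and f1: "partially_differentiable_on S (partial_deriv j f)"
    and g0: "partially_differentiable_on S g" and g1: "partially_differentiable_on S (partial_deriv j g)"
    using f g by (simp_all add: smooth_on_imp_partially_differentiable_on smooth_on_partial_deriv)
  have "partial_deriv j (partial_deriv j (\<lambda>y. f y * g y)) x
      = partial_deriv j (\<lambda>z. partial_deriv j f z * g z + f z * partial_deriv j g z) x"
    by (rule partial_deriv_cong[OF S partial_deriv_mult[OF f0 g0]])
  also have "\<dots> = partial_deriv j (\<lambda>z. partial_deriv j f z * g z) x
      + partial_deriv j (\<lambda>z. f z * partial_deriv j g z) x"
    by (rule partial_deriv_add[OF partially_differentiable_on_mult[OF f1 g0]
          partially_differentiable_on_mult[OF f0 g1] S(2)])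
  also have "\<dots> = partial_deriv j (partial_deriv j f) x * g x + 2 * (partial_deriv j f x * partial_deriv j g x)
      + f x * partial_deriv j (partial_deriv j g) x"
    by (simp add: partial_deriv_mult[OF f1 g0 S(2)] partial_deriv_mult[OF f0 g1 S(2)])
  finally show ?thesis .
qed

lemma euclid_laplacian_mult:
  assumes "open S" "x \<in> S" "smooth_on S f" "smooth_on S g"
  shows "euclid_laplacian (\<lambda>y. f y * g y) x
    = f x * euclid_laplacian g x + 2 * (\<Sum>j\<in>UNIV. partial_deriv j f x * partial_deriv j g x)
      + euclid_laplacian f x * g x"
  unfolding euclid_laplacian_def second_partial_deriv_mult[OF assms]
  by (simp add: sum.distrib sum_distrib_left sum_distrib_right algebra_simps)

lemma euclid_laplacian_add:
  assumes S: "open S" "x \<in> S" and f: "smooth_on S f" and g: "smooth_on S g"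
  shows "euclid_laplacian (\<lambda>y. f y + g y) x = euclid_laplacian f x + euclid_laplacian g x"
proof -
  have "partial_deriv j (partial_deriv j (\<lambda>y. f y + g y)) x
      = partial_deriv j (partial_deriv j f) x + partial_deriv j (partial_deriv j g) x" for j
  proof -
    have "partial_deriv j (partial_deriv j (\<lambda>y. f y + g y)) x
        = partial_deriv j (\<lambda>z. partial_deriv j f z + partial_deriv j g z) x"
      using f g by (intro partial_deriv_cong[OF S] partial_deriv_add smooth_on_imp_partially_differentiable_on)
    also have "\<dots> = partial_deriv j (partial_deriv j f) x + partial_deriv j (partial_deriv j g) x"
      using f g by (intro partial_deriv_add[OF _ _ S(2)] smooth_on_imp_partially_differentiable_on
          smooth_on_partial_deriv)
    finally show ?thesis .
  qed
  then show ?thesis unfolding euclid_laplacian_def by (simp add: sum.distrib)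
qed

lemma euclid_laplacian_sum:
  assumes S: "open S" "x \<in> S" and "finite I" "\<And>i. i \<in> I \<Longrightarrow> smooth_on S (f i)"
  shows "euclid_laplacian (\<lambda>y. \<Sum>i\<in>I. f i y) x = (\<Sum>i\<in>I. euclid_laplacian (f i) x)"
  using assms(3,4)
proof (induction I rule: finite_induct)
  case empty
  then show ?case by (simp add: euclid_laplacian_const)
next
  case (insert a I)
  have "euclid_laplacian (\<lambda>y. f a y + (\<Sum>i\<in>I. f i y)) x
      = euclid_laplacian (f a) x + euclid_laplacian (\<lambda>y. \<Sum>i\<in>I. f i y) x"
    using insert.prems by (intro euclid_laplacian_add[OF S] smooth_on_sum[OF S(1) insert.hyps(1)]) auto
  then show ?case using insert by simp
qed

lemma euclid_laplacian_cmult: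
  assumes "open S" "x \<in> S" "smooth_on S f"
  shows "euclid_laplacian (\<lambda>y. c * f y) x = c * euclid_laplacian f x"
  using euclid_laplacian_mult[OF assms(1,2) smooth_on_const assms(3)]
  by (simp add: partial_deriv_const euclid_laplacian_const)

lemma euclid_laplacian_norm_powr:
  fixes x :: "real^'n::finite"
  assumes x: "x \<noteq> 0"
  shows "euclid_laplacian (\<lambda>y. norm y powr b) x = b * (b + real CARD('n) - 2) * norm x powr (b - 2)"
proof -
  have O: "open (-{0::real^'n})" "x \<in> -{0}" using x by auto
  have second: "partial_deriv j (partial_deriv j (\<lambda>y. norm y powr b)) x
      = b * norm x powr (b - 2) + b * (b - 2) * (x $ j * x $ j) * norm x powr (b - 4)" for j
  proof -
    have "partial_deriv j (partial_deriv j (\<lambda>y. norm y powr b)) x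
        = partial_deriv j (\<lambda>z. (b * z $ j) * norm z powr (b - 2)) x"
      by (rule partial_deriv_cong[OF O]) (simp add: partial_deriv_norm_powr)
    also have "\<dots> = partial_deriv j (\<lambda>z. b * z $ j) x * norm x powr (b - 2)
        + (b * x $ j) * partial_deriv j (\<lambda>z. norm z powr (b - 2)) x"
      by (rule partial_deriv_mult[OF partially_differentiable_on_mult[OF partially_differentiable_on_const
            partially_differentiable_on_coord] partially_differentiable_on_norm_powr O(2)])
    also have "partial_deriv j (\<lambda>z. b * z $ j) x = b"
      using partial_deriv_cmult[OF partially_differentiable_on_coord O(2), of j b j]
      by (simp add: partial_deriv_coord)
    also have "partial_deriv j (\<lambda>z. norm z powr (b - 2)) x = (b - 2) * x $ j * norm x powr (b - 4)"
      using partial_deriv_norm_powr[OF x, of j "b - 2"] by simp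
    finally show ?thesis by (simp only: mult_ac)
  qed
  have "(\<Sum>j\<in>UNIV. x $ j * x $ j) * norm x powr (b - 4) = norm x powr (b - 2)"
  proof -
    have "(\<Sum>j\<in>UNIV. x $ j * x $ j) = norm x powr 2"
      using x by (simp add: sum_coord_squares)
    moreover have "norm x powr 2 * norm x powr (b - 4) = norm x powr (b - 2)"
      using powr_add[of "norm x" 2 "b - 4"] by simp
    ultimately show ?thesis by (simp only:)
  qed
  moreover have "euclid_laplacian (\<lambda>y. norm y powr b) x
      = real CARD('n) * (b * norm x powr (b - 2))
        + b * (b - 2) * (\<Sum>j\<in>UNIV. x $ j * x $ j) * norm x powr (b - 4)"
    unfolding euclid_laplacian_def second
    by (simp only: sum.distrib sum_distrib_left sum_distrib_right sum_constant mult.assoc)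
  ultimately show ?thesis
    by (simp add: algebra_simps)
qed

lemma euclid_laplacian_partial_deriv:
  assumes S: "open S" "x \<in> S" and F: "smooth_on S F"
  shows "euclid_laplacian (partial_deriv i F) x = partial_deriv i (euclid_laplacian F) x"
proof -
  have C1: "partially_differentiable_on S (partial_deriv k G)"
    and C0: "continuous_on S (partial_deriv k G)" if "smooth_on S G" for k G
    using that by (simp_all add: smooth_on_partial_deriv smooth_on_imp_partially_differentiable_on
        smooth_on_imp_continuous_on)
  have swap: "partial_deriv k (partial_deriv l G) z = partial_deriv l (partial_deriv k G) z"
    if "smooth_on S G" "z \<in> S" for k l G z
    using that by (intro partial_deriv_commute[OF S(1)] C1 C0 smooth_on_partial_deriv
        smooth_on_imp_partially_differentiable_on)
  have "partial_deriv j (partial_deriv j (partial_deriv i F)) x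
      = partial_deriv i (partial_deriv j (partial_deriv j F)) x" for j
  proof -
    have "partial_deriv j (partial_deriv j (partial_deriv i F)) x
        = partial_deriv j (partial_deriv i (partial_deriv j F)) x"
      by (rule partial_deriv_cong[OF S swap[OF F]])
    also have "\<dots> = partial_deriv i (partial_deriv j (partial_deriv j F)) x"
      by (rule swap[OF smooth_on_partial_deriv[OF F] S(2)])
    finally show ?thesis .
  qed
  also have "(\<Sum>j\<in>UNIV. partial_deriv i (partial_deriv j (partial_deriv j F)) x)
      = partial_deriv i (\<lambda>y. \<Sum>j\<in>UNIV. partial_deriv j (partial_deriv j F) y) x"
    by (rule partial_deriv_sum[OF finite_class.finite_UNIV _ S(2), symmetric])
      (intro C1 smooth_on_partial_deriv F)
  ultimately show ?thesis
    unfolding euclid_laplacian_def[abs_def] by simp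
qed

lemma positively_homogeneous_euclid_laplacian:
  assumes F: "smooth_on (-{0}) F" and hom: "positively_homogeneous a F"
  shows "positively_homogeneous (a - 2) (euclid_laplacian F)"
proof -
  have "positively_homogeneous (a - 1 - 1) (partial_deriv j (partial_deriv j F))" for j
    using F hom by (intro positively_homogeneous_partial_deriv smooth_on_imp_partially_differentiable_on
        smooth_on_partial_deriv)
  then show ?thesis
    unfolding euclid_laplacian_def[abs_def] by (intro positively_homogeneous_sum) simp
qed

section \<open>Functions on the sphere via homogeneous extensions\<close>

lemma hom_ext_on_sphere: "norm y = 1 \<Longrightarrow> hom_ext f y = f y"
  by (simp add: hom_ext_def)

lemma positively_homogeneous_hom_ext:
  fixes f :: "real^'n::finite \<Rightarrow> real"
  shows "positively_homogeneous 0 (hom_ext f)"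
  unfolding positively_homogeneous_def hom_ext_def
proof (intro allI impI)
  fix y :: "real^'n" and t :: real
  assume "y \<noteq> 0" "t > 0"
  then have scale: "(t *\<^sub>R y) /\<^sub>R norm (t *\<^sub>R y) = y /\<^sub>R norm y"
    by (simp add: field_simps)
  show "f ((t *\<^sub>R y) /\<^sub>R norm (t *\<^sub>R y)) = t powr 0 * f (y /\<^sub>R norm y)"
    unfolding scale using \<open>t > 0\<close> by simp
qed

lemma hom_ext_eq_of_homogeneous:
  assumes hom: "positively_homogeneous a G" and g: "\<And>y. norm y = 1 \<Longrightarrow> g y = G y" and y: "y \<noteq> 0"
  shows "hom_ext g y = norm y powr (-a) * G y"
proof -
  have "hom_ext g y = G (inverse (norm y) *\<^sub>R y)"
    unfolding hom_ext_def using g[of "y /\<^sub>R norm y"] y by simp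
  also have "\<dots> = inverse (norm y) powr a * G y"
    using hom y by (simp add: positively_homogeneous_def)
  also have "\<dots> = norm y powr (-a) * G y"
    using y by (simp add: powr_minus inverse_powr)
  finally show ?thesis .
qed

lemma hom_ext_cong:
  "(\<And>y. norm y = 1 \<Longrightarrow> g y = h y) \<Longrightarrow> y \<noteq> 0 \<Longrightarrow> hom_ext g y = hom_ext h y"
  by (simp add: hom_ext_def)

lemma smooth_on_sphere_of_homogeneous:
  assumes G: "smooth_on (-{0}) G" and hom: "positively_homogeneous a G"
    and g: "\<And>y. norm y = 1 \<Longrightarrow> g y = G y"
  shows "smooth_on_sphere g"
proof -
  have "smooth_on (-{0}) (\<lambda>y. norm y powr (-a) * G y)"
    by (rule smooth_on_mult[OF _ smooth_on_norm_powr G]) auto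
  moreover have "smooth_on (-{0}) (hom_ext g) \<longleftrightarrow> smooth_on (-{0}) (\<lambda>y. norm y powr (-a) * G y)"
    by (rule smooth_on_cong) (auto simp: hom_ext_eq_of_homogeneous[OF hom g])
  ultimately show ?thesis
    unfolding smooth_on_sphere_def by simp
qed

text \<open>Off the origin \<open>hom_ext g y = norm y powr -a * G y\<close>; expand by the product rule and use
  Euler's identity.\<close>

lemma sphere_laplacian_of_homogeneous:
  fixes G :: "real^'n::finite \<Rightarrow> real"
  assumes G: "smooth_on (-{0}) G" and hom: "positively_homogeneous a G"
    and g: "\<And>y. norm y = 1 \<Longrightarrow> g y = G y" and x: "norm x = 1"
  shows "sphere_laplacian g x = euclid_laplacian G x - a * (a + real CARD('n) - 2) * G x"
proof -
  have x0: "x \<noteq> 0" and O: "open (-{0::real^'n})" "x \<in> -{0}" using x by auto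
  have "sphere_laplacian g x = euclid_laplacian (\<lambda>y. norm y powr (-a) * G y) x"
    unfolding sphere_laplacian_def
    by (rule euclid_laplacian_cong[OF O]) (auto simp: hom_ext_eq_of_homogeneous[OF hom g])
  also have "\<dots> = norm x powr (-a) * euclid_laplacian G x
      + 2 * (\<Sum>j\<in>UNIV. partial_deriv j (\<lambda>y. norm y powr (-a)) x * partial_deriv j G x)
      + euclid_laplacian (\<lambda>y. norm y powr (-a)) x * G x"
    by (rule euclid_laplacian_mult[OF O smooth_on_norm_powr G])
  also have "(\<Sum>j\<in>UNIV. partial_deriv j (\<lambda>y. norm y powr (-a)) x * partial_deriv j G x)
      = (-a) * (\<Sum>j\<in>UNIV. x $ j * partial_deriv j G x)"
    using x0 x by (simp add: partial_deriv_norm_powr sum_distrib_left mult.assoc)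
  also have "(\<Sum>j\<in>UNIV. x $ j * partial_deriv j G x) = a * G x"
    using G x0 by (intro euler_homogeneous[OF _ _ hom] smooth_on_imp_partially_differentiable_on
        smooth_on_imp_continuous_on smooth_on_partial_deriv)
  also have "euclid_laplacian (\<lambda>y. norm y powr (-a)) x = (-a) * (-a + real CARD('n) - 2)"
    using euclid_laplacian_norm_powr[OF x0, of "-a"] x by simp
  finally show ?thesis using x by (simp add: algebra_simps)
qed

lemma partial_deriv_hom_ext_of_homogeneous:
  fixes G :: "real^'n::finite \<Rightarrow> real"
  assumes G: "smooth_on (-{0}) G" and hom: "positively_homogeneous a G"
    and g: "\<And>y. norm y = 1 \<Longrightarrow> g y = G y" and x: "norm x = 1"
  shows "partial_deriv i (hom_ext g) x = partial_deriv i G x - a * x $ i * G x"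
proof -
  have x0: "x \<noteq> 0" and O: "open (-{0::real^'n})" "x \<in> -{0}" using x by auto
  have "partial_deriv i (hom_ext g) x = partial_deriv i (\<lambda>y. norm y powr (-a) * G y) x"
    by (rule partial_deriv_cong[OF O]) (auto simp: hom_ext_eq_of_homogeneous[OF hom g])
  also have "\<dots> = partial_deriv i (\<lambda>y. norm y powr (-a)) x * G x + norm x powr (-a) * partial_deriv i G x"
    by (rule partial_deriv_mult[OF partially_differentiable_on_norm_powr
          smooth_on_imp_partially_differentiable_on[OF G] O(2)])
  finally show ?thesis using x by (simp add: partial_deriv_norm_powr[OF x0])
qed

section \<open>Commutation relations on the sphere\<close>

text \<open>\<open>tangential_deriv i h x\<close> is the \<open>i\<close>-th Euclidean component of the spherical gradient
  of \<open>h\<close> at \<open>x\<close>.\<close>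

definition tangential_deriv :: "'n::finite \<Rightarrow> (real^'n \<Rightarrow> real) \<Rightarrow> real^'n \<Rightarrow> real" where
  "tangential_deriv i h = partial_deriv i (hom_ext h)"

lemma positively_homogeneous_coord_mult_hom_ext:
  fixes h :: "real^'n::finite \<Rightarrow> real"
  shows "positively_homogeneous 1 (\<lambda>y. y $ i * hom_ext h y)"
  using positively_homogeneous_coord_mult[OF positively_homogeneous_hom_ext[of h]] by simp

context
  fixes h :: "real^'n::finite \<Rightarrow> real"
  assumes h: "smooth_on_sphere h"
begin

lemma smooth_on_coord_mult_hom_ext: "smooth_on (-{0}) (\<lambda>y. y $ i * hom_ext h y)"
  using h by (intro smooth_on_mult smooth_on_coord) (auto simp: smooth_on_sphere_def)

lemma smooth_on_sphere_mult_coord: "smooth_on_sphere (\<lambda>y. y $ i * h y)"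
  by (rule smooth_on_sphere_of_homogeneous[OF smooth_on_coord_mult_hom_ext[of i]
        positively_homogeneous_coord_mult_hom_ext]) (simp add: hom_ext_on_sphere)

lemma smooth_on_sphere_tangential_deriv: "smooth_on_sphere (tangential_deriv i h)"
  using h positively_homogeneous_partial_deriv[OF _ positively_homogeneous_hom_ext, of h i]
  by (intro smooth_on_sphere_of_homogeneous[of "partial_deriv i (hom_ext h)" "-1"])
    (auto simp: smooth_on_sphere_def tangential_deriv_def smooth_on_partial_deriv
      smooth_on_imp_partially_differentiable_on)

lemma smooth_on_sphere_sphere_laplacian: "smooth_on_sphere (sphere_laplacian h)"
proof (rule smooth_on_sphere_of_homogeneous)
  show "smooth_on (-{0}) (euclid_laplacian (hom_ext h))"
    using h by (intro smooth_on_euclid_laplacian) (auto simp: smooth_on_sphere_def)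
  then show "positively_homogeneous (0 - 2) (euclid_laplacian (hom_ext h))"
    using h by (intro positively_homogeneous_euclid_laplacian positively_homogeneous_hom_ext)
      (auto simp: smooth_on_sphere_def)
qed (simp add: sphere_laplacian_def)

lemma sphere_laplacian_mult_coord:
  assumes x: "norm x = 1"
  shows "sphere_laplacian (\<lambda>y. y $ i * h y) x
    = x $ i * sphere_laplacian h x + 2 * tangential_deriv i h x - sph_dim TYPE('n) * x $ i * h x"
proof -
  have O: "open (-{0::real^'n})" "x \<in> -{0}" using x by auto
  have "sphere_laplacian (\<lambda>y. y $ i * h y) x
      = euclid_laplacian (\<lambda>y. y $ i * hom_ext h y) x - 1 * (1 + real CARD('n) - 2) * (x $ i * hom_ext h x)"
    by (rule sphere_laplacian_of_homogeneous[OF smooth_on_coord_mult_hom_ext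
          positively_homogeneous_coord_mult_hom_ext _ x]) (simp add: hom_ext_on_sphere)
  also have "euclid_laplacian (\<lambda>y. y $ i * hom_ext h y) x
      = x $ i * euclid_laplacian (hom_ext h) x
        + 2 * (\<Sum>j\<in>UNIV. partial_deriv j (\<lambda>y. y $ i) x * partial_deriv j (hom_ext h) x)
        + euclid_laplacian (\<lambda>y. y $ i) x * hom_ext h x"
    by (rule euclid_laplacian_mult[OF O smooth_on_coord h[unfolded smooth_on_sphere_def]])
  also have "(\<Sum>j\<in>UNIV. partial_deriv j (\<lambda>y. y $ i) x * partial_deriv j (hom_ext h) x)
      = tangential_deriv i h x"
  proof -
    have "partial_deriv j (\<lambda>y. y $ i) x * partial_deriv j (hom_ext h) x
        = (if i = j then partial_deriv j (hom_ext h) x else 0)" for j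
      by (simp add: partial_deriv_coord)
    then show ?thesis by (simp add: tangential_deriv_def)
  qed
  finally show ?thesis
    using x by (simp add: euclid_laplacian_coord sph_dim_def sphere_laplacian_def hom_ext_on_sphere
        algebra_simps)
qed

lemma sum_coord_mult_tangential_deriv:
  assumes x: "norm x = 1"
  shows "(\<Sum>i\<in>UNIV. x $ i * tangential_deriv i h x) = 0"
proof -
  have "smooth_on (-{0}) (hom_ext h)"
    using h by (simp add: smooth_on_sphere_def)
  then have "(\<Sum>i\<in>UNIV. x $ i * partial_deriv i (hom_ext h) x) = 0 * hom_ext h x"
    using x by (intro euler_homogeneous positively_homogeneous_hom_ext smooth_on_imp_partially_differentiable_on
        smooth_on_imp_continuous_on smooth_on_partial_deriv) auto
  then show ?thesis by (simp add: tangential_deriv_def)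
qed

lemma sum_tangential_deriv_mult_coord:
  assumes x: "norm x = 1"
  shows "(\<Sum>i\<in>UNIV. tangential_deriv i (\<lambda>y. y $ i * h y) x) = sph_dim TYPE('n) * h x"
proof -
  have O: "x \<in> -{0}" using x by auto
  have "tangential_deriv i (\<lambda>y. y $ i * h y) x = h x + x $ i * tangential_deriv i h x - x $ i * x $ i * h x"
    for i
  proof -
    have "tangential_deriv i (\<lambda>y. y $ i * h y) x
        = partial_deriv i (\<lambda>y. y $ i * hom_ext h y) x - 1 * x $ i * (x $ i * hom_ext h x)"
      unfolding tangential_deriv_def
      by (rule partial_deriv_hom_ext_of_homogeneous[OF smooth_on_coord_mult_hom_ext
            positively_homogeneous_coord_mult_hom_ext _ x]) (simp add: hom_ext_on_sphere)
    also have "partial_deriv i (\<lambda>y. y $ i * hom_ext h y) x = hom_ext h x + x $ i * partial_deriv i (hom_ext h) x"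
      using partial_deriv_mult[OF partially_differentiable_on_coord
          smooth_on_imp_partially_differentiable_on[OF h[unfolded smooth_on_sphere_def]] O, of i i]
      by (simp add: partial_deriv_coord)
    finally show ?thesis using x by (simp add: tangential_deriv_def hom_ext_on_sphere)
  qed
  then have "(\<Sum>i\<in>UNIV. tangential_deriv i (\<lambda>y. y $ i * h y) x)
      = real CARD('n) * h x + (\<Sum>i\<in>UNIV. x $ i * tangential_deriv i h x) - (\<Sum>i\<in>UNIV. x $ i * x $ i) * h x"
    by (simp add: sum.distrib sum_subtractf sum_distrib_right)
  also have "(\<Sum>i\<in>UNIV. x $ i * x $ i) = 1"
    using x by (simp add: sum_coord_squares)
  finally show ?thesis
    using sum_coord_mult_tangential_deriv[OF x] by (simp add: sph_dim_def algebra_simps)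
qed

lemma sphere_laplacian_tangential_deriv:
  assumes x: "norm x = 1"
  shows "sphere_laplacian (tangential_deriv i h) x
    = tangential_deriv i (sphere_laplacian h) x + (sph_dim TYPE('n) - 2) * tangential_deriv i h x
      - 2 * x $ i * sphere_laplacian h x"
proof -
  let ?H = "hom_ext h"
  have H: "smooth_on (-{0}) ?H" and O: "open (-{0::real^'n})" "x \<in> -{0}"
    using h x by (auto simp: smooth_on_sphere_def)
  have "sphere_laplacian (tangential_deriv i h) x
      = euclid_laplacian (partial_deriv i ?H) x - (-1) * (-1 + real CARD('n) - 2) * partial_deriv i ?H x"
    using H by (intro sphere_laplacian_of_homogeneous[OF _ _ _ x] smooth_on_partial_deriv
        positively_homogeneous_partial_deriv[of _ 0, simplified] positively_homogeneous_hom_ext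
        smooth_on_imp_partially_differentiable_on) (auto simp: tangential_deriv_def)
  moreover have "tangential_deriv i (sphere_laplacian h) x
      = partial_deriv i (euclid_laplacian ?H) x - (-2) * x $ i * euclid_laplacian ?H x"
    unfolding tangential_deriv_def
    using H by (intro partial_deriv_hom_ext_of_homogeneous[OF _ _ _ x] smooth_on_euclid_laplacian[OF O(1)]
        positively_homogeneous_euclid_laplacian[of _ 0, simplified] positively_homogeneous_hom_ext)
      (auto simp: sphere_laplacian_def)
  ultimately show ?thesis
    using euclid_laplacian_partial_deriv[OF O H]
    by (simp add: sph_dim_def tangential_deriv_def sphere_laplacian_def algebra_simps)
qed

end

lemma hom_ext_linear_combination:
  "hom_ext (\<lambda>y. a * f y + b * g y) = (\<lambda>y. a * hom_ext f y + b * hom_ext g y)"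
  by (simp add: hom_ext_def fun_eq_iff)

lemma hom_ext_sum: "hom_ext (\<lambda>y. \<Sum>i\<in>I. f i y) = (\<lambda>y. \<Sum>i\<in>I. hom_ext (f i) y)"
  by (simp add: hom_ext_def fun_eq_iff)

lemma smooth_on_sphere_linear_combination:
  "smooth_on_sphere f \<Longrightarrow> smooth_on_sphere g \<Longrightarrow> smooth_on_sphere (\<lambda>y. a * f y + b * g y)"
  unfolding smooth_on_sphere_def hom_ext_linear_combination
  by (intro smooth_on_add smooth_on_cmult open_Compl closed_singleton)

lemma sphere_laplacian_linear_combination:
  assumes "smooth_on_sphere f" "smooth_on_sphere g" "x \<noteq> 0"
  shows "sphere_laplacian (\<lambda>y. a * f y + b * g y) x = a * sphere_laplacian f x + b * sphere_laplacian g x"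
proof -
  have O: "open (-{0::real^'n})" "x \<in> -{0}" using assms by auto
  have f: "smooth_on (-{0}) (hom_ext f)" and g: "smooth_on (-{0}) (hom_ext g)"
    using assms by (auto simp: smooth_on_sphere_def)
  show ?thesis
    unfolding sphere_laplacian_def hom_ext_linear_combination
    using euclid_laplacian_add[OF O smooth_on_cmult[OF O(1) f] smooth_on_cmult[OF O(1) g]]
      euclid_laplacian_cmult[OF O f] euclid_laplacian_cmult[OF O g] by simp
qed

lemma sphere_laplacian_sum:
  assumes "finite I" "\<And>i. i \<in> I \<Longrightarrow> smooth_on_sphere (f i)" "x \<noteq> 0"
  shows "sphere_laplacian (\<lambda>y. \<Sum>i\<in>I. f i y) x = (\<Sum>i\<in>I. sphere_laplacian (f i) x)"
  unfolding sphere_laplacian_def hom_ext_sum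
  using assms by (intro euclid_laplacian_sum[of "-{0}"]) (auto simp: smooth_on_sphere_def)

lemma tangential_deriv_linear_combination:
  assumes "smooth_on_sphere f" "smooth_on_sphere g" "x \<noteq> 0"
  shows "tangential_deriv i (\<lambda>y. a * f y + b * g y) x = a * tangential_deriv i f x + b * tangential_deriv i g x"
proof -
  have x: "x \<in> -{0}" using assms by auto
  have f: "partially_differentiable_on (-{0}) (hom_ext f)" and g: "partially_differentiable_on (-{0}) (hom_ext g)"
    using assms by (auto simp: smooth_on_sphere_def smooth_on_imp_partially_differentiable_on)
  show ?thesis
    unfolding tangential_deriv_def hom_ext_linear_combination
    using partial_deriv_add[OF partially_differentiable_on_mult[OF partially_differentiable_on_const f]
        partially_differentiable_on_mult[OF partially_differentiable_on_const g] x]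
      partial_deriv_cmult[OF f x] partial_deriv_cmult[OF g x] by simp
qed

lemma sphere_laplacian_cong:
  assumes "\<And>y. norm y = 1 \<Longrightarrow> f y = g y" "x \<noteq> 0"
  shows "sphere_laplacian f x = sphere_laplacian g x"
  unfolding sphere_laplacian_def
  by (rule euclid_laplacian_cong[of "-{0}"]) (use assms hom_ext_cong[OF assms(1)] in auto)

lemma sum_coord_mult_sphere_laplacian:
  fixes f :: "'n::finite \<Rightarrow> real^'n \<Rightarrow> real"
  assumes f: "\<And>i. smooth_on_sphere (f i)" and x: "norm x = 1"
  shows "(\<Sum>i\<in>UNIV. x $ i * sphere_laplacian (f i) x)
    = sphere_laplacian (\<lambda>y. \<Sum>i\<in>UNIV. y $ i * f i y) x - 2 * (\<Sum>i\<in>UNIV. tangential_deriv i (f i) x)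
      + sph_dim TYPE('n) * (\<Sum>i\<in>UNIV. x $ i * f i x)"
proof -
  have "sphere_laplacian (\<lambda>y. \<Sum>i\<in>UNIV. y $ i * f i y) x = (\<Sum>i\<in>UNIV. sphere_laplacian (\<lambda>y. y $ i * f i y) x)"
    using x by (intro sphere_laplacian_sum smooth_on_sphere_mult_coord f) auto
  also have "\<dots> = (\<Sum>i\<in>UNIV. x $ i * sphere_laplacian (f i) x + 2 * tangential_deriv i (f i) x
      - sph_dim TYPE('n) * x $ i * f i x)"
    using sphere_laplacian_mult_coord[OF f x] by simp
  finally show ?thesis
    by (simp add: sum.distrib sum_subtractf sum_distrib_left mult.assoc)
qed

lemma sum_tangential_deriv_sphere_laplacian:
  fixes f :: "'n::finite \<Rightarrow> real^'n \<Rightarrow> real"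
  assumes f: "\<And>i. smooth_on_sphere (f i)" and x: "norm x = 1"
  shows "(\<Sum>i\<in>UNIV. tangential_deriv i (sphere_laplacian (f i)) x)
    = sphere_laplacian (\<lambda>y. \<Sum>i\<in>UNIV. tangential_deriv i (f i) y) x
      - (sph_dim TYPE('n) - 2) * (\<Sum>i\<in>UNIV. tangential_deriv i (f i) x)
      + 2 * (\<Sum>i\<in>UNIV. x $ i * sphere_laplacian (f i) x)"
proof -
  have "sphere_laplacian (\<lambda>y. \<Sum>i\<in>UNIV. tangential_deriv i (f i) y) x
      = (\<Sum>i\<in>UNIV. sphere_laplacian (tangential_deriv i (f i)) x)"
    using x by (intro sphere_laplacian_sum smooth_on_sphere_tangential_deriv f) auto
  also have "\<dots> = (\<Sum>i\<in>UNIV. tangential_deriv i (sphere_laplacian (f i)) x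
      + (sph_dim TYPE('n) - 2) * tangential_deriv i (f i) x - 2 * x $ i * sphere_laplacian (f i) x)"
    using sphere_laplacian_tangential_deriv[OF f x] by simp
  finally show ?thesis
    by (simp add: sum.distrib sum_subtractf sum_distrib_left mult.assoc)
qed

section \<open>The GJMS operators\<close>

definition gjms_const :: "'n::finite itself \<Rightarrow> nat \<Rightarrow> real" where
  "gjms_const T m = (sph_dim T - 2 * real m) * (sph_dim T + 2 * real m - 2) / 4"

lemma gjms_Suc_eq:
  fixes u :: "real^'n::finite \<Rightarrow> real"
  shows "gjms (Suc m) u = (\<lambda>x. (-1) * sphere_laplacian (gjms m u) x + gjms_const TYPE('n) (Suc m) * gjms m u x)"
  by (simp add: gjms_const_def fun_eq_iff)

lemma smooth_on_sphere_gjms: "smooth_on_sphere u \<Longrightarrow> smooth_on_sphere (gjms m u)"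
  by (induction m) (auto simp only: gjms_Suc_eq gjms.simps(1)
      intro!: smooth_on_sphere_linear_combination smooth_on_sphere_sphere_laplacian)

lemma gjms_Suc_apply:
  fixes u :: "real^'n::finite \<Rightarrow> real"
  shows "gjms (Suc m) u x = gjms_const TYPE('n) (Suc m) * gjms m u x - sphere_laplacian (gjms m u) x"
  by (simp add: gjms_const_def)

definition coord_gjms_sum :: "nat \<Rightarrow> (real^'n::finite \<Rightarrow> real) \<Rightarrow> real^'n \<Rightarrow> real" where
  "coord_gjms_sum m u y = (\<Sum>i\<in>UNIV. y $ i * gjms m (\<lambda>z. z $ i * u z) y)"

definition tangential_gjms_sum :: "nat \<Rightarrow> (real^'n::finite \<Rightarrow> real) \<Rightarrow> real^'n \<Rightarrow> real" where
  "tangential_gjms_sum m u y = (\<Sum>i\<in>UNIV. tangential_deriv i (gjms m (\<lambda>z. z $ i * u z)) y)"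

lemma coord_gjms_sum_Suc:
  fixes u :: "real^'n::finite \<Rightarrow> real"
  assumes u: "smooth_on_sphere u" and x: "norm x = 1"
  shows "coord_gjms_sum (Suc m) u x
    = - sphere_laplacian (coord_gjms_sum m u) x + 2 * tangential_gjms_sum m u x
      + (gjms_const TYPE('n) (Suc m) - sph_dim TYPE('n)) * coord_gjms_sum m u x"
proof -
  let ?A = "\<lambda>i. gjms m (\<lambda>z. z $ i * u z)"
  have A: "smooth_on_sphere (?A i)" for i
    by (intro smooth_on_sphere_gjms smooth_on_sphere_mult_coord u)
  have "x $ i * gjms (Suc m) (\<lambda>z. z $ i * u z) x
      = gjms_const TYPE('n) (Suc m) * (x $ i * ?A i x) - x $ i * sphere_laplacian (?A i) x" for i
    unfolding gjms_Suc_apply by (simp add: algebra_simps)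
  then have "coord_gjms_sum (Suc m) u x
      = - (\<Sum>i\<in>UNIV. x $ i * sphere_laplacian (?A i) x)
        + gjms_const TYPE('n) (Suc m) * coord_gjms_sum m u x"
    unfolding coord_gjms_sum_def by (simp add: sum_subtractf sum_distrib_left)
  then show ?thesis
    unfolding sum_coord_mult_sphere_laplacian[OF A x]
    by (simp add: coord_gjms_sum_def[abs_def] tangential_gjms_sum_def algebra_simps)
qed

lemma tangential_gjms_sum_Suc:
  fixes u :: "real^'n::finite \<Rightarrow> real"
  assumes u: "smooth_on_sphere u" and x: "norm x = 1"
  shows "tangential_gjms_sum (Suc m) u x
    = - sphere_laplacian (tangential_gjms_sum m u) x
      + (sph_dim TYPE('n) - 2 + gjms_const TYPE('n) (Suc m)) * tangential_gjms_sum m u x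
      - 2 * (sphere_laplacian (coord_gjms_sum m u) x - 2 * tangential_gjms_sum m u x
        + sph_dim TYPE('n) * coord_gjms_sum m u x)"
proof -
  let ?A = "\<lambda>i. gjms m (\<lambda>z. z $ i * u z)"
  have A: "smooth_on_sphere (?A i)" for i
    by (intro smooth_on_sphere_gjms smooth_on_sphere_mult_coord u)
  have x0: "x \<noteq> 0" using x by auto
  have "tangential_deriv i (gjms (Suc m) (\<lambda>z. z $ i * u z)) x
      = (-1) * tangential_deriv i (sphere_laplacian (?A i)) x
        + gjms_const TYPE('n) (Suc m) * tangential_deriv i (?A i) x" for i
    unfolding gjms_Suc_eq
    by (rule tangential_deriv_linear_combination[OF smooth_on_sphere_sphere_laplacian[OF A[of i]] A[of i] x0])
  then have "tangential_gjms_sum (Suc m) u x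
      = - (\<Sum>i\<in>UNIV. tangential_deriv i (sphere_laplacian (?A i)) x)
        + gjms_const TYPE('n) (Suc m) * tangential_gjms_sum m u x"
    unfolding tangential_gjms_sum_def by (simp add: sum_subtractf sum_distrib_left del: gjms.simps)
  then show ?thesis
    unfolding sum_tangential_deriv_sphere_laplacian[OF A x] sum_coord_mult_sphere_laplacian[OF A x]
    by (simp add: coord_gjms_sum_def[abs_def] tangential_gjms_sum_def[abs_def] algebra_simps)
qed

lemma sphere_laplacian_gjms_pair:
  fixes u :: "real^'n::finite \<Rightarrow> real"
  assumes u: "smooth_on_sphere u" and x: "x \<noteq> 0"
  shows "sphere_laplacian (\<lambda>y. a * gjms m u y + b * real m * gjms (m - 1) u y) x
    = a * (gjms_const TYPE('n) (Suc m) * gjms m u x - gjms (Suc m) u x)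
      + b * real m * (gjms_const TYPE('n) m * gjms (m - 1) u x - gjms m u x)"
proof -
  have L: "smooth_on_sphere (gjms k u)" for k
    by (rule smooth_on_sphere_gjms[OF u])
  have pred: "real m * sphere_laplacian (gjms (m - 1) u) x
      = real m * (gjms_const TYPE('n) m * gjms (m - 1) u x - gjms m u x)"
    by (cases m) (simp_all add: gjms_Suc_apply del: gjms.simps)
  have "sphere_laplacian (gjms m u) x = gjms_const TYPE('n) (Suc m) * gjms m u x - gjms (Suc m) u x"
    by (simp add: gjms_Suc_apply del: gjms.simps)
  then show ?thesis
    unfolding sphere_laplacian_linear_combination[OF L L x] unfolding mult.assoc[of b "real m"] pred
    by (simp del: gjms.simps)
qed

lemma gjms_coord_sums_Suc:
  fixes u :: "real^'n::finite \<Rightarrow> real" and m :: nat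
  defines "n \<equiv> sph_dim TYPE('n)" and "M \<equiv> real m"
  assumes u: "smooth_on_sphere u" and x: "norm x = 1"
    and IH: "\<And>y. norm y = 1 \<Longrightarrow> coord_gjms_sum m u y = gjms m u y + M * (n + 2 * M - 2) * gjms (m - 1) u y"
      "\<And>y. norm y = 1 \<Longrightarrow> tangential_gjms_sum m u y
        = (n + 2 * M) * (gjms m u y + M * (n + 2 * M - 2) / 2 * gjms (m - 1) u y)"
  shows "coord_gjms_sum (Suc m) u x = gjms (Suc m) u x + (M + 1) * (n + 2 * (M + 1) - 2) * gjms m u x"
    "tangential_gjms_sum (Suc m) u x
      = (n + 2 * (M + 1)) * (gjms (Suc m) u x + (M + 1) * (n + 2 * (M + 1) - 2) / 2 * gjms m u x)"
proof -
  define c c' where "c = gjms_const TYPE('n) (Suc m)" and "c' = gjms_const TYPE('n) m"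
  define L0 L1 L2 where "L0 = gjms (m - 1) u x" and "L1 = gjms m u x" and "L2 = gjms (Suc m) u x"
  have x0: "x \<noteq> 0" using x by auto
  have "sphere_laplacian (coord_gjms_sum m u) x
      = sphere_laplacian (\<lambda>y. 1 * gjms m u y + (n + 2 * M - 2) * real m * gjms (m - 1) u y) x"
    using IH(1) by (intro sphere_laplacian_cong x0) (simp add: M_def algebra_simps)
  then have \<Delta>Q: "sphere_laplacian (coord_gjms_sum m u) x
      = (c * L1 - L2) + M * (n + 2 * M - 2) * (c' * L0 - L1)"
    unfolding sphere_laplacian_gjms_pair[OF u x0] by (simp add: c_def c'_def L0_def L1_def L2_def M_def)
  have "sphere_laplacian (tangential_gjms_sum m u) x = sphere_laplacian (\<lambda>y. (n + 2 * M) * gjms m u y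
      + ((n + 2 * M) * (n + 2 * M - 2) / 2) * real m * gjms (m - 1) u y) x"
    using IH(2) by (intro sphere_laplacian_cong x0) (simp add: M_def algebra_simps)
  then have \<Delta>R: "sphere_laplacian (tangential_gjms_sum m u) x
      = (n + 2 * M) * ((c * L1 - L2) + M * (n + 2 * M - 2) / 2 * (c' * L0 - L1))"
    unfolding sphere_laplacian_gjms_pair[OF u x0]
    by (simp add: c_def c'_def L0_def L1_def L2_def M_def algebra_simps)
  have Q: "coord_gjms_sum m u x = L1 + M * (n + 2 * M - 2) * L0"
    and R: "tangential_gjms_sum m u x = (n + 2 * M) * (L1 + M * (n + 2 * M - 2) / 2 * L0)"
    using IH[OF x] by (simp_all add: L0_def L1_def)
  have c: "c = (n - 2 * (M + 1)) * (n + 2 * (M + 1) - 2) / 4" "c' = (n - 2 * M) * (n + 2 * M - 2) / 4"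
    by (simp_all add: c_def c'_def gjms_const_def n_def M_def)
  show "coord_gjms_sum (Suc m) u x = gjms (Suc m) u x + (M + 1) * (n + 2 * (M + 1) - 2) * gjms m u x"
    unfolding coord_gjms_sum_Suc[OF u x] \<Delta>Q Q R n_def[symmetric] c_def[symmetric] L1_def[symmetric]
      L2_def[symmetric]
    by (simp add: c field_simps)
  show "tangential_gjms_sum (Suc m) u x
      = (n + 2 * (M + 1)) * (gjms (Suc m) u x + (M + 1) * (n + 2 * (M + 1) - 2) / 2 * gjms m u x)"
    unfolding tangential_gjms_sum_Suc[OF u x] \<Delta>Q \<Delta>R Q R n_def[symmetric] c_def[symmetric]
      L1_def[symmetric] L2_def[symmetric]
    by (simp add: c field_simps)
qed

lemma gjms_coord_sums:
  fixes u :: "real^'n::finite \<Rightarrow> real"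
  assumes u: "smooth_on_sphere u" and "norm x = 1"
  shows "coord_gjms_sum m u x
      = gjms m u x + real m * (sph_dim TYPE('n) + 2 * real m - 2) * gjms (m - 1) u x \<and>
    tangential_gjms_sum m u x = (sph_dim TYPE('n) + 2 * real m) *
      (gjms m u x + real m * (sph_dim TYPE('n) + 2 * real m - 2) / 2 * gjms (m - 1) u x)"
  using \<open>norm x = 1\<close>
proof (induction m arbitrary: x)
  case 0
  have "coord_gjms_sum 0 u x = (\<Sum>i\<in>UNIV. x $ i * x $ i) * u x"
    by (simp add: coord_gjms_sum_def sum_distrib_right mult.assoc)
  then show ?case
    using 0 sum_tangential_deriv_mult_coord[OF u 0]
    by (simp add: sum_coord_squares tangential_gjms_sum_def)
next
  case (Suc m)
  show ?case
    using gjms_coord_sums_Suc[OF u Suc.prems] Suc.IH by (simp add: algebra_simps)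
qed

theorem theorem1p3:
  fixes u :: "real^'n::finite \<Rightarrow> real" and k :: nat and x :: "real^'n"
  assumes "CARD('n) \<ge> 3" and "k \<ge> 1"
    and "smooth_on_sphere u"
    and "x \<in> sphere 0 1"
  shows "(\<Sum>i\<in>UNIV. x $ i * (gjms k (\<lambda>y. y $ i * u y) x - x $ i * gjms k u x))
         = real k * (sph_dim TYPE('n) + 2 * real k - 2) * gjms (k - 1) u x"
proof -
  \<comment> \<open>The identity holds in every dimension and, trivially, for \<open>k = 0\<close>.\<close>
  have x: "norm x = 1" using assms(4) by simp
  have "(\<Sum>i\<in>UNIV. x $ i * (gjms k (\<lambda>y. y $ i * u y) x - x $ i * gjms k u x))
      = coord_gjms_sum k u x - (\<Sum>i\<in>UNIV. x $ i * x $ i) * gjms k u x"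
    by (simp add: coord_gjms_sum_def right_diff_distrib sum_subtractf sum_distrib_right mult.assoc)
  also have "\<dots> = real k * (sph_dim TYPE('n) + 2 * real k - 2) * gjms (k - 1) u x"
    using gjms_coord_sums[OF assms(3) x, of k] x by (simp add: sum_coord_squares)
  finally show ?thesis .
qed

end
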